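(* Let $m\geq 2$ be an integer and let $T$ be a tree with at least $m$ vertices. Then, for some $s$, there are subtrees $T_1,\ldots, T_s$ of $T$ which divide $T$ and satisfy $m\leq |T_i|\leq 4m$ for each $i\in [s]$.
   Context: Subtrees $T_1,\dots,T_s$ of $T$ divide $T$ if $E(T_1),\dots,E(T_s)$ form a partition of $E(T)$. $|T_i|$ is the number of vertices of $T_i$. *)

theory Defs
  imports Main
begin

definition graph :: "'a set \<Rightarrow> 'a set set \<Rightarrow> bool" where
  "graph V E \<longleftrightarrow> finite V \<and> (\<forall>e\<in>E. e \<subseteq> V \<and> card e = 2)"

definition adj :: "'a set set \<Rightarrow> 'a \<Rightarrow> 'a \<Rightarrow> bool" where
  "adj E u v \<longleftrightarrow> {u, v} \<in> E"

definition walk :: "'a set \<Rightarrow> 'a set set \<Rightarrow> 'a list \<Rightarrow> bool" where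
  "walk V E p \<longleftrightarrow> p \<noteq> [] \<and> set p \<subseteq> V \<and>
     (\<forall>i. Suc i < length p \<longrightarrow> adj E (p ! i) (p ! Suc i))"

definition connected_graph :: "'a set \<Rightarrow> 'a set set \<Rightarrow> bool" where
  "connected_graph V E \<longleftrightarrow> V \<noteq> {} \<and>
     (\<forall>u\<in>V. \<forall>v\<in>V. \<exists>p. walk V E p \<and> hd p = u \<and> last p = v)"

definition is_cycle :: "'a set \<Rightarrow> 'a set set \<Rightarrow> 'a list \<Rightarrow> bool" where
  "is_cycle V E c \<longleftrightarrow> walk V E c \<and> length c \<ge> 3 \<and> distinct c \<and> adj E (last c) (hd c)"

definition acyclic_graph :: "'a set \<Rightarrow> 'a set set \<Rightarrow> bool" where
  "acyclic_graph V E \<longleftrightarrow> (\<nexists>c. is_cycle V E c)"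

definition tree :: "'a set \<Rightarrow> 'a set set \<Rightarrow> bool" where
  "tree V E \<longleftrightarrow> graph V E \<and> connected_graph V E \<and> acyclic_graph V E"

definition subtree :: "'a set \<times> 'a set set \<Rightarrow> 'a set \<Rightarrow> 'a set set \<Rightarrow> bool" where
  "subtree T V E \<longleftrightarrow> fst T \<subseteq> V \<and> snd T \<subseteq> E \<and> tree (fst T) (snd T)"

definition divides_tree :: "('a set \<times> 'a set set) list \<Rightarrow> 'a set \<Rightarrow> 'a set set \<Rightarrow> bool" where
  "divides_tree Ts V E \<longleftrightarrow>
     (\<forall>i<length Ts. subtree (Ts ! i) V E) \<and>
     (\<forall>i<length Ts. \<forall>j<length Ts. i \<noteq> j \<longrightarrow> snd (Ts ! i) \<inter> snd (Ts ! j) = {}) \<and>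
     (\<Union>i<length Ts. snd (Ts ! i)) = E"

end

theory Submission
  imports Defs
begin

text \<open>Root the tree T at a vertex r. If |T| \<ge> m, one can cut off a subtree S with
  m \<le> |S| < 2m meeting the rest R \<ni> r of T in a single vertex: delete an edge rc; of the
  two trees obtained, one has at least m vertices and by induction contains such a subtree,
  and the other is reattached to its rest through rc. If |T| > 4m, then
  |R| = |T| + 1 - |S| > 2m, so R is a smaller tree with at least m vertices and we recurse on
  it; a tree with at most 4m vertices divides itself.\<close>

definition reachable :: "'a set set \<Rightarrow> 'a \<Rightarrow> 'a \<Rightarrow> bool" where
  "reachable E = (\<lambda>u v. {u, v} \<in> E)\<^sup>*\<^sup>*"

definition reach_connected :: "'a set \<Rightarrow> 'a set set \<Rightarrow> bool" where
  "reach_connected V E \<longleftrightarrow> V \<noteq> {} \<and> (\<forall>u\<in>V. \<forall>v\<in>V. reachable E u v)"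

lemma reachable_refl [simp]: "reachable E u u"
  by (simp add: reachable_def)

lemma reachable_edge: "{u, v} \<in> E \<Longrightarrow> reachable E u v"
  unfolding reachable_def by auto

lemma reachable_trans: "reachable E u v \<Longrightarrow> reachable E v w \<Longrightarrow> reachable E u w"
  unfolding reachable_def by (rule rtranclp_trans)

lemma reachable_step: "reachable E u v \<Longrightarrow> {v, w} \<in> E \<Longrightarrow> reachable E u w"
  by (blast intro: reachable_trans reachable_edge)

lemma reachable_sym: "reachable E u v \<Longrightarrow> reachable E v u"
  unfolding reachable_def
proof (induction rule: rtranclp_induct)
  case (step v w)
  then have "{w, v} \<in> E" by (simp add: insert_commute)
  then show ?case using step.IH by (rule converse_rtranclp_into_rtranclp)
qed simp

lemma reachable_mono: "E \<subseteq> F \<Longrightarrow> reachable E u v \<Longrightarrow> reachable F u v"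
  unfolding reachable_def by (erule rtranclp_mono[THEN predicate2D, rotated]) auto

lemma reachable_in_graph:
  assumes "graph V E" "u \<in> V" "reachable E u v"
  shows "v \<in> V"
  using assms(3,2) unfolding reachable_def
  by induction (use assms(1) in \<open>auto simp: graph_def\<close>)

lemma walk_snoc:
  assumes "walk V E p" "v \<in> V" "adj E (last p) v"
  shows "walk V E (p @ [v])"
  using assms unfolding walk_def
  by (auto simp: nth_append last_conv_nth less_Suc_eq dest!: sym[of "Suc _"])

lemma walk_take: "walk V E p \<Longrightarrow> 0 < n \<Longrightarrow> walk V E (take n p)"
  unfolding walk_def by (auto dest: in_set_takeD)

text \<open>A walk reaching a vertex already on it is cut back there, which keeps it a path.\<close>

lemma reachable_imp_path:
  assumes "graph V E" "u \<in> V" "reachable E u v"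
  shows "\<exists>p. walk V E p \<and> hd p = u \<and> last p = v \<and> distinct p"
  using assms(3) unfolding reachable_def
proof (induction rule: rtranclp_induct)
  case base
  have "walk V E [u]" using assms(2) by (simp add: walk_def)
  then show ?case by fastforce
next
  case (step v w)
  then obtain p where p: "walk V E p" "hd p = u" "last p = v" "distinct p" by blast
  show ?case
  proof (cases "w \<in> set p")
    case False
    have "reachable E u w"
      using step.hyps unfolding reachable_def by (rule rtranclp.rtrancl_into_rtrancl)
    then have "w \<in> V" by (rule reachable_in_graph[OF assms(1,2)])
    then have "walk V E (p @ [w])"
      using walk_snoc[OF p(1)] step.hyps(2) p(3) by (simp add: adj_def)
    moreover have "p \<noteq> []" using p(1) by (simp add: walk_def)
    ultimately show ?thesis using p False by (intro exI[of _ "p @ [w]"]) auto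
  next
    case True
    then obtain xs ys where p_split: "p = xs @ w # ys" by (meson split_list)
    then have "walk V E (xs @ [w])" using walk_take[OF p(1), of "Suc (length xs)"] by simp
    moreover have "hd (xs @ [w]) = u" using p(2) p_split by (cases xs) auto
    ultimately show ?thesis using p(4) p_split by (intro exI[of _ "xs @ [w]"]) auto
  qed
qed

lemma walk_imp_reachable:
  assumes "walk V E p"
  shows "reachable E (hd p) (last p)"
proof -
  have p: "p \<noteq> []" using assms by (simp add: walk_def)
  have "reachable E (hd p) (p ! i)" if "i < length p" for i
    using that
  proof (induction i)
    case (Suc i)
    then have "adj E (p ! i) (p ! Suc i)" using assms by (simp add: walk_def)
    with Suc show ?case by (simp add: adj_def reachable_step)
  qed (simp add: p hd_conv_nth)
  then show ?thesis using p by (simp add: last_conv_nth)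
qed

lemma connected_graph_iff_reach_connected:
  assumes "graph V E"
  shows "connected_graph V E \<longleftrightarrow> reach_connected V E"
  unfolding connected_graph_def reach_connected_def
  using reachable_imp_path[OF assms] walk_imp_reachable by metis

lemma tree_iff_reach_connected:
  "tree V E \<longleftrightarrow> graph V E \<and> reach_connected V E \<and> acyclic_graph V E"
  unfolding tree_def using connected_graph_iff_reach_connected by blast

lemma walk_mono: "walk V E p \<Longrightarrow> V \<subseteq> V' \<Longrightarrow> E \<subseteq> E' \<Longrightarrow> walk V' E' p"
  unfolding walk_def adj_def by auto

lemma acyclic_graph_mono:
  "acyclic_graph V' E' \<Longrightarrow> V \<subseteq> V' \<Longrightarrow> E \<subseteq> E' \<Longrightarrow> acyclic_graph V E"
  unfolding acyclic_graph_def is_cycle_def adj_def using walk_mono by blast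

lemma tree_of_reach_connected_subgraph:
  assumes "tree V E" "W \<subseteq> V" "F \<subseteq> E" "\<forall>e\<in>F. e \<subseteq> W" "reach_connected W F"
  shows "tree W F"
proof -
  have "graph W F"
    using assms(1-4) finite_subset unfolding tree_def graph_def by blast
  moreover have "acyclic_graph W F"
    using assms(1-3) acyclic_graph_mono unfolding tree_def by blast
  ultimately show ?thesis using assms(5) by (simp add: tree_iff_reach_connected)
qed

lemma tree_singleton: "tree {v} {}"
  unfolding tree_iff_reach_connected graph_def reach_connected_def acyclic_graph_def
    is_cycle_def walk_def
  by (auto simp: adj_def)

lemma graph_edges_disjoint:
  assumes "graph A EA" "graph B EB" "A \<inter> B = {}"
  shows "EA \<inter> EB = {}"
proof -
  have "e \<subseteq> A \<inter> B" "card e = 2" if "e \<in> EA" "e \<in> EB" for e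
    using assms(1,2) that unfolding graph_def by auto
  with assms(3) show ?thesis by fastforce
qed

lemma reach_connected_insert_edge:
  assumes "reach_connected A EA" "reach_connected B EB" "a \<in> A" "b \<in> B"
  shows "reach_connected (A \<union> B) (insert {a, b} (EA \<union> EB))"
proof -
  let ?F = "insert {a, b} (EA \<union> EB)"
  have A: "reachable ?F u v" if "u \<in> A" "v \<in> A" for u v
    using assms(1) that reachable_mono[of EA ?F] unfolding reach_connected_def by blast
  have B: "reachable ?F u v" if "u \<in> B" "v \<in> B" for u v
    using assms(2) that reachable_mono[of EB ?F] unfolding reach_connected_def by blast
  have "reachable ?F b a" by (simp add: reachable_edge insert_commute)
  then have to_a: "reachable ?F u a" if "u \<in> A \<union> B" for u
  proof (cases "u \<in> A")
    case False
    with that have "reachable ?F u b" using B assms(4) by blast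
    then show ?thesis using \<open>reachable ?F b a\<close> by (rule reachable_trans)
  qed (use A assms(3) in blast)
  have "reachable ?F u v" if "u \<in> A \<union> B" "v \<in> A \<union> B" for u v
    using reachable_trans[OF to_a[OF that(1)] reachable_sym[OF to_a[OF that(2)]]] .
  then show ?thesis using assms(3) unfolding reach_connected_def by blast
qed

lemma reachable_within_component:
  assumes "reachable E u v"
  shows "reachable {e\<in>E. e \<subseteq> {w. reachable E u w}} u v"
  using assms unfolding reachable_def
proof (induction rule: rtranclp_induct)
  case (step v w)
  then have "{v, w} \<in> {e\<in>E. e \<subseteq> {w. (\<lambda>u v. {u, v} \<in> E)\<^sup>*\<^sup>* u w}}"
    by (auto intro: rtranclp.rtrancl_into_rtrancl)
  then show ?case by (rule rtranclp.rtrancl_into_rtrancl[OF step.IH])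
qed simp

lemma reach_connected_component:
  "reach_connected {v. reachable E u v} {e\<in>E. e \<subseteq> {v. reachable E u v}}"
  unfolding reach_connected_def
proof (intro conjI ballI)
  fix v w assume "v \<in> {v. reachable E u v}" "w \<in> {v. reachable E u v}"
  then have "reachable {e\<in>E. e \<subseteq> {v. reachable E u v}} u v"
    and "reachable {e\<in>E. e \<subseteq> {v. reachable E u v}} u w"
    by (simp_all add: reachable_within_component)
  then show "reachable {e\<in>E. e \<subseteq> {v. reachable E u v}} v w"
    by (blast intro: reachable_sym reachable_trans)
qed (auto intro: exI[of _ u])

lemma reachable_remove_edge:
  assumes "reachable E a v"
  shows "reachable (E - {{a, b}}) a v \<or> reachable (E - {{a, b}}) b v"
  using assms unfolding reachable_def
proof (induction rule: rtranclp_induct)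
  case (step v w)
  show ?case
  proof (cases "{v, w} = {a, b}")
    case True
    then have "w = a \<or> w = b" by blast
    then show ?thesis by auto
  next
    case False
    with step show ?thesis
      by (auto intro: rtranclp.rtrancl_into_rtrancl)
  qed
qed simp

text \<open>A path from a to b avoiding the edge {a, b} would close a cycle with it.\<close>

lemma tree_remove_edge_disconnects:
  assumes "tree V E" "{a, b} \<in> E"
  shows "\<not> reachable (E - {{a, b}}) a b"
proof
  assume ab: "reachable (E - {{a, b}}) a b"
  have "graph V (E - {{a, b}})" "a \<in> V" "card {a, b} = 2"
    using assms unfolding tree_def graph_def by auto
  then obtain p where p: "walk V (E - {{a, b}}) p" "hd p = a" "last p = b" "distinct p"
    using reachable_imp_path[OF _ _ ab] by blast
  have "a \<noteq> b" using \<open>card {a, b} = 2\<close> by auto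
  have "p \<noteq> []" using p(1) by (simp add: walk_def)
  then have ends: "p ! 0 = a" "p ! (length p - 1) = b"
    using p(2,3) by (simp_all add: hd_conv_nth last_conv_nth)
  have "length p \<noteq> 1" using ends \<open>a \<noteq> b\<close> by force
  moreover have "length p \<noteq> 2"
  proof
    assume "length p = 2"
    then have "adj (E - {{a, b}}) (p ! 0) (p ! 1)" using p(1) by (simp add: walk_def)
    then show False using ends \<open>length p = 2\<close> by (simp add: adj_def)
  qed
  moreover have "length p \<noteq> 0" using \<open>p \<noteq> []\<close> by simp
  ultimately have "length p \<ge> 3" by arith
  moreover have "walk V E p" using walk_mono[OF p(1)] by blast
  moreover have "adj E (last p) (hd p)"
    using p(2,3) assms(2) by (simp add: adj_def insert_commute)
  ultimately have "is_cycle V E p" using p(4) by (simp add: is_cycle_def)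
  then show False using assms(1) unfolding tree_def acyclic_graph_def by blast
qed

lemma reachable_first_edge:
  assumes "reachable E u v" "u \<noteq> v"
  obtains w where "{u, w} \<in> E"
  using assms unfolding reachable_def by (cases rule: converse_rtranclpE) auto

lemma tree_remove_edge:
  assumes T: "tree V E" and ab: "{a, b} \<in> E"
  obtains A EA B EB where "tree A EA" "tree B EB" "a \<in> A" "b \<in> B"
    "A \<union> B = V" "A \<inter> B = {}" "insert {a, b} (EA \<union> EB) = E"
proof -
  define E' where "E' = E - {{a, b}}"
  define A where "A = {v. reachable E' a v}"
  define B where "B = {v. reachable E' b v}"
  define EA where "EA = {e\<in>E'. e \<subseteq> A}"
  define EB where "EB = {e\<in>E'. e \<subseteq> B}"
  have G: "graph V E" "reach_connected V E" using T by (simp_all add: tree_iff_reach_connected)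
  then have "a \<in> V" "b \<in> V" using ab by (auto simp: graph_def)
  have reachable_V: "v \<in> V" if "reachable E' u v" "u \<in> V" for u v
    using reachable_in_graph[OF G(1) that(2)] reachable_mono[OF _ that(1)] by (auto simp: E'_def)
  have "A \<subseteq> V" "B \<subseteq> V"
    using reachable_V \<open>a \<in> V\<close> \<open>b \<in> V\<close> by (auto simp: A_def B_def)
  moreover have "V \<subseteq> A \<union> B"
    using G(2) \<open>a \<in> V\<close> reachable_remove_edge[of E a]
    by (auto simp: reach_connected_def A_def B_def E'_def)
  ultimately have "A \<union> B = V" by blast
  have "A \<inter> B = {}"
  proof (rule ccontr)
    assume "A \<inter> B \<noteq> {}"
    then obtain v where "reachable E' a v" "reachable E' b v" by (auto simp: A_def B_def)
    then have "reachable E' a b" by (blast intro: reachable_trans reachable_sym)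
    then show False using tree_remove_edge_disconnects[OF T ab] by (simp add: E'_def)
  qed
  have "e \<in> EA \<union> EB" if "e \<in> E'" for e
  proof -
    have "card e = 2" "e \<subseteq> V" using G(1) \<open>e \<in> E'\<close> by (auto simp: graph_def E'_def)
    then obtain u v where e: "e = {u, v}" by (auto simp: card_2_iff)
    then have "u \<in> A \<union> B" using \<open>e \<subseteq> V\<close> \<open>A \<union> B = V\<close> by auto
    moreover have "reachable E' u v" using e \<open>e \<in> E'\<close> by (simp add: reachable_edge)
    ultimately show ?thesis
      using e \<open>e \<in> E'\<close> by (auto simp: EA_def EB_def A_def B_def intro: reachable_trans)
  qed
  then have "insert {a, b} (EA \<union> EB) = E" using ab by (auto simp: EA_def EB_def E'_def)
  moreover have "tree A EA" "tree B EB"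
    using tree_of_reach_connected_subgraph[OF T] \<open>A \<subseteq> V\<close> \<open>B \<subseteq> V\<close>
      reach_connected_component[of E' a] reach_connected_component[of E' b]
    by (auto simp: EA_def EB_def A_def B_def E'_def)
  moreover have "a \<in> A" "b \<in> B" by (simp_all add: A_def B_def)
  ultimately show ?thesis using that \<open>A \<union> B = V\<close> \<open>A \<inter> B = {}\<close> by blast
qed

definition tree_split ::
    "'a set \<Rightarrow> 'a set set \<Rightarrow> 'a set \<Rightarrow> 'a set set \<Rightarrow> 'a set \<Rightarrow> 'a set set \<Rightarrow> bool" where
  "tree_split V E VS ES VR ER \<longleftrightarrow> tree VS ES \<and> tree VR ER \<and> VS \<union> VR = V \<and>
     (\<exists>w. VS \<inter> VR = {w}) \<and> ES \<union> ER = E \<and> ES \<inter> ER = {}"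

lemma tree_split_card:
  assumes "tree_split V E VS ES VR ER"
  shows "card VS + card VR = card V + 1"
proof -
  obtain w where "VS \<inter> VR = {w}" "VS \<union> VR = V" "finite VS" "finite VR"
    using assms by (auto simp: tree_split_def tree_def graph_def)
  then show ?thesis using card_Un_Int[of VS VR] by simp
qed

lemma tree_split_trivial: "tree V E \<Longrightarrow> r \<in> V \<Longrightarrow> tree_split V E V E {r} {}"
  by (auto simp: tree_split_def tree_singleton)

lemma tree_split_extend:
  assumes T: "tree V E" and split: "tree_split A EA VS ES VR ER" and "tree B EB"
    and "A \<union> B = V" "A \<inter> B = {}" "insert {a, b} (EA \<union> EB) = E" "a \<in> VR" "b \<in> B"
  shows "tree_split V E VS ES (VR \<union> B) (insert {a, b} (ER \<union> EB))"
proof -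
  obtain w where S: "tree VS ES" "tree VR ER" "VS \<union> VR = A" "VS \<inter> VR = {w}"
    "ES \<union> ER = EA" "ES \<inter> ER = {}"
    using split by (auto simp: tree_split_def)
  have graphs: "graph VS ES" "graph VR ER" "graph B EB"
    using S(1,2) \<open>tree B EB\<close> by (simp_all add: tree_def)
  have "VS \<inter> B = {}" using S(3) \<open>A \<inter> B = {}\<close> by blast
  have "tree (VR \<union> B) (insert {a, b} (ER \<union> EB))"
  proof (rule tree_of_reach_connected_subgraph[OF T])
    show "VR \<union> B \<subseteq> V" "insert {a, b} (ER \<union> EB) \<subseteq> E"
      using assms(4-6) S(3,5) by auto
    show "\<forall>e\<in>insert {a, b} (ER \<union> EB). e \<subseteq> VR \<union> B"
      using graphs(2,3) assms(7,8) by (auto simp: graph_def)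
    show "reach_connected (VR \<union> B) (insert {a, b} (ER \<union> EB))"
      using S(2) \<open>tree B EB\<close> assms(7,8)
      by (simp add: tree_iff_reach_connected reach_connected_insert_edge)
  qed
  moreover have "ES \<inter> insert {a, b} (ER \<union> EB) = {}"
  proof -
    have "ES \<inter> EB = {}" using graph_edges_disjoint[OF graphs(1,3) \<open>VS \<inter> B = {}\<close>] .
    moreover have "{a, b} \<notin> ES"
      using graphs(1) \<open>VS \<inter> B = {}\<close> assms(8) unfolding graph_def by blast
    ultimately show ?thesis using S(6) by blast
  qed
  moreover have "VS \<inter> (VR \<union> B) = {w}" using S(4) \<open>VS \<inter> B = {}\<close> by blast
  ultimately show ?thesis
    using S assms(4,6) by (auto simp: tree_split_def)
qed

lemma tree_split_off_subtree:
  assumes "tree V E" "r \<in> V" "1 \<le> m" "m \<le> card V"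
  shows "\<exists>VS ES VR ER. tree_split V E VS ES VR ER \<and> r \<in> VR \<and> m \<le> card VS \<and> card VS < 2 * m"
  using assms(1,2,4)
proof (induction "card V" arbitrary: V E r rule: less_induct)
  case less
  show ?case
  proof (cases "card V < 2 * m")
    case True
    moreover have "tree_split V E V E {r} {}" using less.prems(1,2) by (rule tree_split_trivial)
    ultimately show ?thesis using less.prems(3) by blast
  next
    case False
    have "finite V" using less.prems(1) by (simp add: tree_def graph_def)
    have "\<not> V \<subseteq> {r}" using False assms(3) card_mono[of "{r}" V] by auto
    then obtain x where "x \<in> V" "r \<noteq> x" by blast
    then have "reachable E r x"
      using less.prems(1,2) by (simp add: tree_iff_reach_connected reach_connected_def)
    then obtain c where "{r, c} \<in> E" using \<open>r \<noteq> x\<close> by (rule reachable_first_edge)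
    then obtain A EA B EB where AB: "tree A EA" "tree B EB" "r \<in> A" "c \<in> B"
      "A \<union> B = V" "A \<inter> B = {}" "insert {r, c} (EA \<union> EB) = E"
      by (rule tree_remove_edge[OF less.prems(1)])
    have "finite A" "finite B" using AB(5) \<open>finite V\<close> by auto
    then have card: "card V = card A + card B" using card_Un_disjoint AB(5,6) by blast
    have "card A > 0" "card B > 0"
      using AB(3,4) \<open>finite A\<close> \<open>finite B\<close> by (auto simp: card_gt_0_iff)
    consider "m \<le> card B" | "m \<le> card A" using False card by linarith
    then show ?thesis
    proof cases
      case 1
      moreover have "card B < card V" using card \<open>card A > 0\<close> by linarith
      ultimately obtain VS ES VR ER where split: "tree_split B EB VS ES VR ER" "c \<in> VR"
        "m \<le> card VS" "card VS < 2 * m"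
        using less.hyps[OF _ AB(2,4)] by blast
      have "B \<union> A = V" "B \<inter> A = {}" "insert {c, r} (EB \<union> EA) = E"
        using AB(5-7) by (auto simp: insert_commute)
      then have "tree_split V E VS ES (VR \<union> A) (insert {c, r} (ER \<union> EA))"
        using tree_split_extend[OF less.prems(1) split(1) AB(1)] split(2) AB(3) by blast
      then show ?thesis using split(3,4) AB(3) by blast
    next
      case 2
      moreover have "card A < card V" using card \<open>card B > 0\<close> by linarith
      ultimately obtain VS ES VR ER where split: "tree_split A EA VS ES VR ER" "r \<in> VR"
        "m \<le> card VS" "card VS < 2 * m"
        using less.hyps[OF _ AB(1,3)] by blast
      have "tree_split V E VS ES (VR \<union> B) (insert {r, c} (ER \<union> EB))"
        using tree_split_extend[OF less.prems(1) split(1) AB(2,5-7) split(2) AB(4)] .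
      then show ?thesis using split(2-4) by blast
    qed
  qed
qed

lemma divides_tree_single: "tree V E \<Longrightarrow> divides_tree [(V, E)] V E"
  by (simp add: divides_tree_def subtree_def lessThan_Suc)

lemma divides_tree_Cons:
  assumes "divides_tree Ts V' E'" "subtree T V E" "V' \<subseteq> V" "snd T \<union> E' = E" "snd T \<inter> E' = {}"
  shows "divides_tree (T # Ts) V E"
proof -
  have sub: "\<forall>i<length Ts. subtree (Ts ! i) V' E'" and E': "(\<Union>i<length Ts. snd (Ts ! i)) = E'"
    and disj: "\<forall>i<length Ts. \<forall>j<length Ts. i \<noteq> j \<longrightarrow> snd (Ts ! i) \<inter> snd (Ts ! j) = {}"
    using assms(1) by (simp_all add: divides_tree_def)
  have "\<forall>i<length Ts. subtree (Ts ! i) V E"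
    using sub assms(3,4) by (auto simp: subtree_def)
  moreover have "snd T \<inter> snd (Ts ! i) = {}" if "i < length Ts" for i
    using assms(5) E' that by blast
  moreover have "(\<Union>i<length (T # Ts). snd ((T # Ts) ! i)) = E"
    using E' assms(4) by (simp add: lessThan_Suc_eq_insert_0 UN_insert image_image)
  ultimately show ?thesis
    using assms(2) disj unfolding divides_tree_def by (auto simp: All_less_Suc2)
qed

theorem lemma3p7:
  fixes m :: nat and V :: "'a set" and E :: "'a set set"
  assumes "m \<ge> 2" and "tree V E" and "card V \<ge> m"
  shows "\<exists>Ts. divides_tree Ts V E \<and>
           (\<forall>i<length Ts. m \<le> card (fst (Ts ! i)) \<and> card (fst (Ts ! i)) \<le> 4 * m)"
  using assms(2,3)
proof (induction "card V" arbitrary: V E rule: less_induct)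
  case less
  show ?case
  proof (cases "card V \<le> 4 * m")
    case True
    then show ?thesis using less.prems divides_tree_single by fastforce
  next
    case False
    obtain r where "r \<in> V" using less.prems(2) assms(1) by fastforce
    moreover have "1 \<le> m" using assms(1) by simp
    ultimately obtain VS ES VR ER where split: "tree_split V E VS ES VR ER"
      and VS: "m \<le> card VS" "card VS < 2 * m"
      using tree_split_off_subtree[OF less.prems(1) _ _ less.prems(2)] by blast
    have "card VS + card VR = card V + 1" using split by (rule tree_split_card)
    then have "card VR < card V" "m \<le> card VR" using VS False assms(1) by linarith+
    moreover have "tree VR ER" using split by (simp add: tree_split_def)
    ultimately obtain Ts where Ts: "divides_tree Ts VR ER"
      "\<forall>i<length Ts. m \<le> card (fst (Ts ! i)) \<and> card (fst (Ts ! i)) \<le> 4 * m"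
      using less.hyps by blast
    have "divides_tree ((VS, ES) # Ts) V E"
      using divides_tree_Cons[OF Ts(1)] split by (auto simp: tree_split_def subtree_def)
    moreover have "\<forall>i<length ((VS, ES) # Ts).
        m \<le> card (fst (((VS, ES) # Ts) ! i)) \<and> card (fst (((VS, ES) # Ts) ! i)) \<le> 4 * m"
      using Ts(2) VS by (simp add: All_less_Suc2)
    ultimately show ?thesis by blast
  qed
qed

end
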